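(* Let $\mathcal R:(\mathbb R^d\setminus\{0\})\times\mathbb R\to\mathbb R$ be differentiable and scale-invariant in its first argument: $\mathcal R(kw,\alpha)=\mathcal R(w,\alpha)$ for all $k>0$. Let $\hat w\in\mathbb R^d$ be fixed, let $\eta,\eta_\alpha>0$, and let $(w_t,\alpha_t)$ be generated by $w_{t+1}=w_t-\eta\nabla_w\mathcal R(w_t,\alpha_t)$, $\alpha_{t+1}=\alpha_t-\eta_\alpha\partial_\alpha\mathcal R(w_t,\alpha_t)$ with $w_0\neq0$. Write $\nabla_w\mathcal R_t:=\nabla_w\mathcal R(w_t,\alpha_t)$, $\rho_t:=\langle\hat w,w_t\rangle/\|w_t\|$, $\rho_t^\perp:=\|\hat w-\rho_tw_t/\|w_t\|\|$. (Convergence) If for some $t\ge0$, $\rho_t>0$ and $$\frac{\eta\rho_t}{\|w_t\|}\|\nabla_w\mathcal R_t\|^2\le-2\langle\hat w,\nabla_w\mathcal R_t\rangle,$$ then $(\rho^\perp_{t+1})^2\le(\rho^\perp_t)^2$. (Divergence) If for some $t\ge0$, $0<\rho_t^\perp/\rho_t<1$, $\alpha_t>0$ and $$\frac{\eta}{\|w_t\|}\|\nabla_w\mathcal R_t\|\ge\frac{2\rho_t\rho_t^\perp}{\rho_t^2-(\rho_t^\perp)^2},$$ then $(\rho^\perp_{t+1})^2\ge(\rho^\perp_t)^2$.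
   Context: All norms and inner products are Euclidean. Note that scale-invariance implies $\langle w,\nabla_w\mathcal R(w,\alpha)\rangle=0$, so all iterates stay nonzero. *)

theory Defs
  imports "HOL-Analysis.Analysis"
begin

definition rho :: "'a::real_inner \<Rightarrow> 'a \<Rightarrow> real" where
  "rho wh w = (wh \<bullet> w) / norm w"

definition rho_perp :: "'a::real_inner \<Rightarrow> 'a \<Rightarrow> real" where
  "rho_perp wh w = norm (wh - (rho wh w / norm w) *\<^sub>R w)"

end

theory Submission
  imports Defs
begin

text \<open>
  Scale invariance makes \<open>\<nabla>\<^sub>w\<R>\<^sub>t\<close> orthogonal to \<open>w\<^sub>t\<close>, so
  \<open>\<parallel>w\<^sub>t\<^sub>+\<^sub>1\<parallel>\<^sup>2 = \<parallel>w\<^sub>t\<parallel>\<^sup>2 + \<eta>\<^sup>2\<parallel>\<nabla>\<^sub>w\<R>\<^sub>t\<parallel>\<^sup>2\<close> and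
  \<open>\<langle>w\<^sub>h, w\<^sub>t\<^sub>+\<^sub>1\<rangle> = \<parallel>w\<^sub>t\<parallel>\<rho>\<^sub>t - \<eta>\<langle>w\<^sub>h, \<nabla>\<^sub>w\<R>\<^sub>t\<rangle>\<close>.
  Since \<open>(\<rho>\<^sup>\<bottom>)\<^sup>2 = \<parallel>w\<^sub>h\<parallel>\<^sup>2 - \<rho>\<^sup>2\<close>, both claims compare
  \<open>\<rho>\<^sub>t\<^sub>+\<^sub>1\<^sup>2 = (\<parallel>w\<^sub>t\<parallel>\<rho>\<^sub>t - \<eta>\<langle>w\<^sub>h, \<nabla>\<^sub>w\<R>\<^sub>t\<rangle>)\<^sup>2 / (\<parallel>w\<^sub>t\<parallel>\<^sup>2 + \<eta>\<^sup>2\<parallel>\<nabla>\<^sub>w\<R>\<^sub>t\<parallel>\<^sup>2)\<close>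
  with \<open>\<rho>\<^sub>t\<^sup>2\<close>, which are elementary real inequalities. For divergence one also
  needs \<open>|\<langle>w\<^sub>h, \<nabla>\<^sub>w\<R>\<^sub>t\<rangle>| \<le> \<rho>\<^sub>t\<^sup>\<bottom> \<parallel>\<nabla>\<^sub>w\<R>\<^sub>t\<parallel>\<close>, which is
  Cauchy-Schwarz for \<open>\<langle>w\<^sub>h - \<rho>\<^sub>t w\<^sub>t/\<parallel>w\<^sub>t\<parallel>, \<nabla>\<^sub>w\<R>\<^sub>t\<rangle>\<close>, again by orthogonality.
\<close>

lemma rho_perp_squared:
  fixes wh v :: "'a::real_inner"
  shows "(rho_perp wh v)\<^sup>2 = (norm wh)\<^sup>2 - (rho wh v)\<^sup>2"
proof (cases "v = 0")
  case True
  then show ?thesis by (simp add: rho_perp_def rho_def)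
next
  case False
  then have "(rho_perp wh v)\<^sup>2 = (norm wh)\<^sup>2 - 2 * (rho wh v / norm v) * (wh \<bullet> v)
      + (rho wh v / norm v)\<^sup>2 * (norm v)\<^sup>2"
    unfolding rho_perp_def power2_norm_eq_inner
    by (simp add: inner_diff inner_commute power2_eq_square algebra_simps)
  also have "\<dots> = (norm wh)\<^sup>2 - (rho wh v)\<^sup>2"
    using False unfolding rho_def by (simp add: field_simps power2_eq_square)
  finally show ?thesis .
qed

lemma rho_pos_imp_nonzero: "rho wh v > 0 \<Longrightarrow> v \<noteq> 0"
  by (auto simp: rho_def)

lemma abs_inner_orthogonal_le_rho_perp:
  fixes wh v g :: "'a::real_inner"
  assumes "g \<bullet> v = 0"
  shows "\<bar>wh \<bullet> g\<bar> \<le> rho_perp wh v * norm g"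
proof -
  have "wh \<bullet> g = (wh - (rho wh v / norm v) *\<^sub>R v) \<bullet> g"
    using assms by (simp add: inner_diff_left inner_diff_right inner_commute)
  then show ?thesis
    unfolding rho_perp_def by (metis Cauchy_Schwarz_ineq2)
qed

lemma has_derivative_zero_along_constant_line:
  fixes f :: "'a::real_normed_vector \<Rightarrow> real"
  assumes deriv: "(f has_derivative f') (at x)"
    and "\<delta> > 0"
    and const: "\<And>t. \<bar>t\<bar> < \<delta> \<Longrightarrow> f (x + t *\<^sub>R u) = f x"
  shows "f' u = 0"
proof -
  have line: "((\<lambda>t. x + t *\<^sub>R u) has_derivative (\<lambda>h. h *\<^sub>R u)) (at 0)"
    by (auto intro!: derivative_eq_intros)
  have "((\<lambda>t. f (x + t *\<^sub>R u)) has_derivative (\<lambda>h. f' (h *\<^sub>R u))) (at 0)"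
    using has_derivative_compose[OF line] deriv by (simp add: o_def)
  moreover have "(\<lambda>h. f' (h *\<^sub>R u)) = (*) (f' u)"
    using has_derivative_linear[OF deriv] by (auto simp: linear_scale)
  ultimately have "((\<lambda>t. f (x + t *\<^sub>R u)) has_real_derivative f' u) (at 0)"
    by (simp add: has_field_derivative_def)
  moreover have "((\<lambda>t. f (x + t *\<^sub>R u)) has_real_derivative 0) (at 0)"
    by (rule has_field_derivative_transform_within_open[where S="ball 0 \<delta>", of "\<lambda>_. f x"])
       (use assms in \<open>auto simp: const\<close>)
  ultimately show ?thesis
    by (rule DERIV_unique)
qed

lemma scale_invariant_gradient_orthogonal:
  fixes R :: "'a::real_inner \<Rightarrow> real \<Rightarrow> real"
  assumes deriv: "((\<lambda>p. R (fst p) (snd p)) has_derivative (\<lambda>p. gw \<bullet> fst p + ga * snd p)) (at (v, b))"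
    and scale: "\<And>k. k > 0 \<Longrightarrow> R (k *\<^sub>R v) b = R v b"
  shows "gw \<bullet> v = 0"
proof -
  have "(\<lambda>p. gw \<bullet> fst p + ga * snd p) (v, 0) = 0"
  proof (rule has_derivative_zero_along_constant_line[OF deriv])
    fix t :: real
    assume "\<bar>t\<bar> < 1"
    then have "R ((1 + t) *\<^sub>R v) b = R v b"
      by (intro scale) simp
    then show "R (fst ((v, b) + t *\<^sub>R (v, 0))) (snd ((v, b) + t *\<^sub>R (v, 0))) = R (fst (v, b)) (snd (v, b))"
      by (simp add: scaleR_add_left)
  qed simp
  then show ?thesis
    by simp
qed

lemma rho_squared_orthogonal_step:
  fixes wh v g :: "'a::real_inner"
  assumes orth: "g \<bullet> v = 0" and "v \<noteq> 0"
  shows "(rho wh (v - \<eta> *\<^sub>R g))\<^sup>2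
    = (norm v * rho wh v - \<eta> * (wh \<bullet> g))\<^sup>2 / ((norm v)\<^sup>2 + (\<eta> * norm g)\<^sup>2)"
proof -
  have "(norm (v - \<eta> *\<^sub>R g))\<^sup>2 = (norm v)\<^sup>2 + (\<eta> * norm g)\<^sup>2"
    using orth unfolding power_mult_distrib power2_norm_eq_inner
    by (simp add: inner_diff inner_commute algebra_simps power2_eq_square)
  moreover have "wh \<bullet> (v - \<eta> *\<^sub>R g) = norm v * rho wh v - \<eta> * (wh \<bullet> g)"
    using \<open>v \<noteq> 0\<close> by (simp add: rho_def inner_diff)
  ultimately show ?thesis
    by (simp add: rho_def power_divide)
qed

lemma convergence_step_inequality:
  fixes n r s d :: real
  assumes "n > 0" "r > 0" "r * s\<^sup>2 \<le> -2 * n * d"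
  shows "r\<^sup>2 * (n\<^sup>2 + s\<^sup>2) \<le> (n * r - d)\<^sup>2"
proof -
  have bound: "r * (2 * n\<^sup>2 + s\<^sup>2) \<le> 2 * n * (n * r - d)" "0 \<le> r * (2 * n\<^sup>2 + s\<^sup>2)"
    using assms by (simp_all add: power2_eq_square algebra_simps)
  have "4 * n\<^sup>2 * (r\<^sup>2 * (n\<^sup>2 + s\<^sup>2)) + (r * s\<^sup>2)\<^sup>2 = (r * (2 * n\<^sup>2 + s\<^sup>2))\<^sup>2"
    by (simp add: power2_eq_square algebra_simps)
  also have "\<dots> \<le> (2 * n * (n * r - d))\<^sup>2"
    using bound by (rule power_mono)
  also have "\<dots> = 4 * n\<^sup>2 * (n * r - d)\<^sup>2"
    by (simp add: power_mult_distrib)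
  finally have "4 * n\<^sup>2 * (r\<^sup>2 * (n\<^sup>2 + s\<^sup>2)) \<le> 4 * n\<^sup>2 * (n * r - d)\<^sup>2"
    using zero_le_power2[of "r * s\<^sup>2"] by linarith
  then show ?thesis
    using \<open>n > 0\<close> by simp
qed

lemma divergence_step_inequality:
  fixes n r q s d :: real
  assumes "n \<ge> 0" "r \<ge> 0" "q \<ge> 0" "s \<ge> 0" "\<bar>d\<bar> \<le> q * s"
    and "2 * r * q * n \<le> s * (r\<^sup>2 - q\<^sup>2)"
  shows "(n * r - d)\<^sup>2 \<le> r\<^sup>2 * (n\<^sup>2 + s\<^sup>2)"
proof -
  have "\<bar>n * r - d\<bar> \<le> n * r + q * s"
    using assms(5) mult_nonneg_nonneg[OF assms(1,2)] unfolding abs_le_iff by linarith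
  then have "(n * r - d)\<^sup>2 \<le> (n * r + q * s)\<^sup>2"
    by (metis abs_ge_zero order_trans power2_abs power_mono)
  also have "\<dots> \<le> r\<^sup>2 * (n\<^sup>2 + s\<^sup>2)"
    using mult_left_mono[OF assms(6) assms(4)]
    by (simp add: power2_eq_square algebra_simps)
  finally show ?thesis .
qed

lemma rho_perp_orthogonal_step_le:
  fixes wh v g :: "'a::real_inner"
  assumes orth: "g \<bullet> v = 0" and "\<eta> \<ge> 0" and pos: "rho wh v > 0"
    and descent: "\<eta> * rho wh v / norm v * (norm g)\<^sup>2 \<le> - 2 * (wh \<bullet> g)"
  shows "(rho_perp wh (v - \<eta> *\<^sub>R g))\<^sup>2 \<le> (rho_perp wh v)\<^sup>2"
proof -
  have "v \<noteq> 0"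
    using pos by (rule rho_pos_imp_nonzero)
  then have n: "norm v > 0" by simp
  have "\<eta> * rho wh v * (norm g)\<^sup>2 \<le> -2 * norm v * (wh \<bullet> g)"
    using descent n by (simp add: divide_le_eq algebra_simps)
  then have "\<eta> * (\<eta> * rho wh v * (norm g)\<^sup>2) \<le> \<eta> * (-2 * norm v * (wh \<bullet> g))"
    using \<open>\<eta> \<ge> 0\<close> by (rule mult_left_mono)
  then have "rho wh v * (\<eta> * norm g)\<^sup>2 \<le> -2 * norm v * (\<eta> * (wh \<bullet> g))"
    using n by (simp add: power2_eq_square algebra_simps)
  then have "(rho wh v)\<^sup>2 * ((norm v)\<^sup>2 + (\<eta> * norm g)\<^sup>2)
      \<le> (norm v * rho wh v - \<eta> * (wh \<bullet> g))\<^sup>2"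
    by (rule convergence_step_inequality[OF n pos])
  then have "(rho wh v)\<^sup>2 \<le> (rho wh (v - \<eta> *\<^sub>R g))\<^sup>2"
    using n by (simp add: rho_squared_orthogonal_step[OF orth \<open>v \<noteq> 0\<close>] pos_le_divide_eq add_pos_nonneg)
  then show ?thesis
    by (simp add: rho_perp_squared)
qed

lemma rho_perp_orthogonal_step_ge:
  fixes wh v g :: "'a::real_inner"
  assumes orth: "g \<bullet> v = 0" and "\<eta> \<ge> 0"
    and ratio: "0 < rho_perp wh v / rho wh v" "rho_perp wh v / rho wh v < 1"
    and large: "\<eta> / norm v * norm g
      \<ge> 2 * rho wh v * rho_perp wh v / ((rho wh v)\<^sup>2 - (rho_perp wh v)\<^sup>2)"
  shows "(rho_perp wh (v - \<eta> *\<^sub>R g))\<^sup>2 \<ge> (rho_perp wh v)\<^sup>2"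
proof -
  define r q where "r = rho wh v" and "q = rho_perp wh v"
  have "q \<ge> 0"
    by (simp add: q_def rho_perp_def)
  with ratio have "r > 0" "q > 0" "q < r"
    by (auto simp: r_def q_def zero_less_divide_iff divide_less_eq)
  then have "v \<noteq> 0"
    using rho_pos_imp_nonzero r_def by blast
  then have n: "norm v > 0" by simp
  have "r\<^sup>2 - q\<^sup>2 > 0"
    using \<open>q > 0\<close> \<open>q < r\<close> by (simp add: power_strict_mono)
  then have "2 * r * q * norm v \<le> \<eta> * norm g * (r\<^sup>2 - q\<^sup>2)"
    using large n by (simp add: r_def q_def divide_le_eq le_divide_eq mult.commute)
  moreover have "\<bar>\<eta> * (wh \<bullet> g)\<bar> \<le> q * (\<eta> * norm g)"
    using abs_inner_orthogonal_le_rho_perp[OF orth, of wh] \<open>\<eta> \<ge> 0\<close>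
    by (simp add: q_def abs_mult mult_left_mono algebra_simps)
  ultimately have "(norm v * r - \<eta> * (wh \<bullet> g))\<^sup>2 \<le> r\<^sup>2 * ((norm v)\<^sup>2 + (\<eta> * norm g)\<^sup>2)"
    using \<open>r > 0\<close> \<open>q > 0\<close> \<open>\<eta> \<ge> 0\<close> by (intro divergence_step_inequality) auto
  then have "(rho wh (v - \<eta> *\<^sub>R g))\<^sup>2 \<le> r\<^sup>2"
    using n by (simp add: rho_squared_orthogonal_step[OF orth \<open>v \<noteq> 0\<close>] r_def pos_divide_le_eq add_pos_nonneg)
  then show ?thesis
    by (simp add: rho_perp_squared r_def)
qed

theorem lemma5p1:
  fixes R :: "real ^ 'd \<Rightarrow> real \<Rightarrow> real"
    and gw :: "real ^ 'd \<Rightarrow> real \<Rightarrow> real ^ 'd"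
    and ga :: "real ^ 'd \<Rightarrow> real \<Rightarrow> real"
    and wh :: "real ^ 'd"
    and eta eta_a :: real
    and w :: "nat \<Rightarrow> real ^ 'd"
    and a :: "nat \<Rightarrow> real"
  assumes deriv: "\<And>v b. v \<noteq> 0 \<Longrightarrow>
      ((\<lambda>p. R (fst p) (snd p)) has_derivative (\<lambda>p. gw v b \<bullet> fst p + ga v b * snd p)) (at (v, b))"
    and scale: "\<And>v b k. v \<noteq> 0 \<Longrightarrow> k > 0 \<Longrightarrow> R (k *\<^sub>R v) b = R v b"
    and eta: "eta > 0" and eta_a: "eta_a > 0"
    and w0: "w 0 \<noteq> 0"
    and wstep: "\<And>t. w (Suc t) = w t - eta *\<^sub>R gw (w t) (a t)"
    and astep: "\<And>t. a (Suc t) = a t - eta_a * ga (w t) (a t)"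
  shows "\<forall>t. (rho wh (w t) > 0 \<and>
            eta * rho wh (w t) / norm (w t) * (norm (gw (w t) (a t)))\<^sup>2
              \<le> - 2 * (wh \<bullet> gw (w t) (a t))
            \<longrightarrow> (rho_perp wh (w (Suc t)))\<^sup>2 \<le> (rho_perp wh (w t))\<^sup>2)
         \<and> (0 < rho_perp wh (w t) / rho wh (w t) \<and> rho_perp wh (w t) / rho wh (w t) < 1 \<and> a t > 0 \<and>
            eta / norm (w t) * norm (gw (w t) (a t))
              \<ge> 2 * rho wh (w t) * rho_perp wh (w t) / ((rho wh (w t))\<^sup>2 - (rho_perp wh (w t))\<^sup>2)
            \<longrightarrow> (rho_perp wh (w (Suc t)))\<^sup>2 \<ge> (rho_perp wh (w t))\<^sup>2)"
proof (intro allI conjI impI)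
  fix t
  have orth: "gw (w t) (a t) \<bullet> w t = 0"
  proof (cases "w t = 0")
    case False
    show ?thesis
      by (rule scale_invariant_gradient_orthogonal[OF deriv[OF False] scale[OF False]])
  qed simp
  show "(rho_perp wh (w (Suc t)))\<^sup>2 \<le> (rho_perp wh (w t))\<^sup>2"
    if "rho wh (w t) > 0 \<and> eta * rho wh (w t) / norm (w t) * (norm (gw (w t) (a t)))\<^sup>2
          \<le> - 2 * (wh \<bullet> gw (w t) (a t))"
    using that eta rho_perp_orthogonal_step_le[OF orth] by (simp add: wstep)
  show "(rho_perp wh (w (Suc t)))\<^sup>2 \<ge> (rho_perp wh (w t))\<^sup>2"
    if "0 < rho_perp wh (w t) / rho wh (w t) \<and> rho_perp wh (w t) / rho wh (w t) < 1 \<and> a t > 0 \<and>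
        eta / norm (w t) * norm (gw (w t) (a t))
          \<ge> 2 * rho wh (w t) * rho_perp wh (w t) / ((rho wh (w t))\<^sup>2 - (rho_perp wh (w t))\<^sup>2)"
    using that eta rho_perp_orthogonal_step_ge[OF orth] by (simp add: wstep)
qed

end
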